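(* Let $\mathcal{G}=(V,E)$ be an undirected graph on $V=\{v_1,\dots,v_k\}$, let $\mathcal{S}$ be the set of valid states, and let $\mathcal{C}$ be a collection of correlation sets, each of size at most $2$, with associated mean losses $\mu_i^s$ (all as defined in the context). Let $\mathcal{K}\subseteq\mathcal{S}$ be a cover of $\mathcal{C}$. For $i,j\in[k]$ and $b\in\{0,1\}$, define $X^{i,j}_b:=\mu_i^{s_2}-\mu_i^{s_1}$, where $(s_1,s_2)$ is an $(i,j,b)$-pair contained in $\mathcal{K}$ (so $s_1(j)=0$, $s_2(j)=1$), whenever $\{i,j\}\in\mathcal{C}$ and $(i,j,b)$ is a dichotomy; set $X^{i,j}_b:=0$ otherwise. Then for every state $s\in\mathcal{S}$ and every $i\in[k]$ with $s(i)=b$, and every state $s'\in\mathcal{K}$ with $s'(i)=b$, $$\mu_i^s=\mu_i^{s'}+\sum_{j=1}^k X^{i,j}_b\big[\mathbf{1}(s(j)=1)\mathbf{1}(s'(j)=0)-\mathbf{1}(s(j)=0)\mathbf{1}(s'(j)=1)\big].$$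
   Context: Write $[k]=\{1,\dots,k\}$. The valid states are $\mathcal{S}=\{s\in\{0,1\}^k : \{v_i: s(i)=1\}\text{ is an independent set of }\mathcal{G}\}$ ($s(i)=1$ means criterion $i$ is "fixed", $s(i)=0$ "unfixed"). A collection of correlation sets $\mathcal{C}=\{C_1,\dots,C_n\}$ consists of subsets of $[k]$ of size at most $m$ (here $m=2$). For each state $s$ and each $j\in[n]$ there is a parameter $\theta_j^s\ge 0$ which depends only on the restriction of $s$ to the coordinates in $C_j$ (i.e. $\theta_j^s=\theta_j^{s'}$ whenever $s$ and $s'$ agree on $C_j$). The mean loss of criterion $i$ at state $s$ is $\mu_i^s=\sum_{j=1}^n\theta_j^s\,\mathbf{1}(i\in C_j)$. For $i\neq j$ and $b\in\{0,1\}$, $(i,j,b)$ is a dichotomy if there exist $s,s'\in\mathcal{S}$ with $s(j)=0$, $s'(j)=1$ and $s(i)=s'(i)=b$. An $(i,j,b)$-pair is a pair $(s,s')$ of states that agree in every coordinate except $j$, with $s(i)=s'(i)=b$, $s(j)=0$, $s'(j)=1$. A subset $\mathcal{K}\subseteq\mathcal{S}$ is a cover of $\mathcal{C}$ if (1) for every $\{i,j\}\in\mathcal{C}$ and every dichotomy $(i,j,b)$ (in either order of $i,j$), $\mathcal{K}$ contains an $(i,j,b)$-pair, and (2) for every singleton $\{i\}\in\mathcal{C}$, $\mathcal{K}$ contains states $s,s'$ with $s(i)=0$, $s'(i)=1$ and $s(l)=s'(l)$ for all $l\neq i$. *)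

theory Defs
  imports Complex_Main
begin

text \<open>Conventions: criteria/vertices are 1..k. A state is a function nat => bool
  (True = fixed, i.e. s(i)=1), which is False outside 1..k. Correlation sets are C_1..C_n,
  given by Cs :: nat => nat set on indices 1..n; parameters theta l s.\<close>

definition valid_states :: "nat \<Rightarrow> (nat \<Rightarrow> nat \<Rightarrow> bool) \<Rightarrow> (nat \<Rightarrow> bool) set" where
  "valid_states k E = {s. (\<forall>i. s i \<longrightarrow> i \<in> {1..k}) \<and> (\<forall>u v. s u \<and> s v \<longrightarrow> \<not> E u v)}"

definition mean_loss :: "nat \<Rightarrow> (nat \<Rightarrow> nat set) \<Rightarrow> (nat \<Rightarrow> (nat \<Rightarrow> bool) \<Rightarrow> real)
    \<Rightarrow> nat \<Rightarrow> (nat \<Rightarrow> bool) \<Rightarrow> real" where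
  "mean_loss n Cs \<theta> i s = (\<Sum>l\<in>{1..n}. \<theta> l s * of_bool (i \<in> Cs l))"

definition in_corr :: "nat \<Rightarrow> (nat \<Rightarrow> nat set) \<Rightarrow> nat set \<Rightarrow> bool" where
  "in_corr n Cs A = (\<exists>l\<in>{1..n}. Cs l = A)"

definition dichotomy :: "(nat \<Rightarrow> bool) set \<Rightarrow> nat \<Rightarrow> nat \<Rightarrow> bool \<Rightarrow> bool" where
  "dichotomy S i j b = (i \<noteq> j \<and> (\<exists>s\<in>S. \<exists>s'\<in>S. \<not> s j \<and> s' j \<and> s i = b \<and> s' i = b))"

definition is_pair :: "nat \<Rightarrow> nat \<Rightarrow> bool \<Rightarrow> (nat \<Rightarrow> bool) \<Rightarrow> (nat \<Rightarrow> bool) \<Rightarrow> bool" where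
  "is_pair i j b s s' = ((\<forall>l. l \<noteq> j \<longrightarrow> s l = s' l) \<and> s i = b \<and> s' i = b \<and> \<not> s j \<and> s' j)"

definition is_cover :: "(nat \<Rightarrow> bool) set \<Rightarrow> nat \<Rightarrow> (nat \<Rightarrow> nat set) \<Rightarrow> (nat \<Rightarrow> bool) set \<Rightarrow> bool" where
  "is_cover S n Cs K =
     (K \<subseteq> S \<and>
      (\<forall>i j b. in_corr n Cs {i, j} \<and> i \<noteq> j \<and> dichotomy S i j b \<longrightarrow>
          (\<exists>s\<in>K. \<exists>s'\<in>K. is_pair i j b s s')) \<and>
      (\<forall>i. in_corr n Cs {i} \<longrightarrow>
          (\<exists>s\<in>K. \<exists>s'\<in>K. \<not> s i \<and> s' i \<and> (\<forall>l. l \<noteq> i \<longrightarrow> s l = s' l))))"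

end

theory Submission
  imports Defs
begin

text \<open>Since every correlation set has at most two elements, the mean loss \<open>\<mu>\<^sub>i(s)\<close> splits
  into the loss of the sets equal to \<open>{i}\<close>, which depends on \<open>s(i)\<close> only, and for each
  \<open>j \<noteq> i\<close> the loss of the sets equal to \<open>{i, j}\<close>, which depends on \<open>s(i)\<close> and \<open>s(j)\<close> only.
  Hence, for \<open>s(i) = s'(i)\<close>, the difference \<open>\<mu>\<^sub>i(s) - \<mu>\<^sub>i(s')\<close> is the sum over \<open>j\<close> of the
  changes of the \<open>{i, j}\<close>-losses. Such a change vanishes when \<open>s(j) = s'(j)\<close>; otherwise it is
  \<open>\<plusminus>\<close> the change of \<open>\<mu>\<^sub>i\<close> along the \<open>(i, j, b)\<close>-pair in the cover, which is \<open>X(i, j, b)\<close>.\<close>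

lemma of_bool_mem_card_le_2:
  assumes "C \<subseteq> J" "finite J" "card C \<le> 2"
  shows "(of_bool (i \<in> C) :: 'b :: semiring_1)
           = of_bool (C = {i}) + (\<Sum>j\<in>J - {i}. of_bool (C = {i, j}))"
proof (cases "i \<in> C")
  case False
  then show ?thesis by (auto intro!: sum.neutral)
next
  case True
  have "card (C - {i}) \<le> 1"
    using assms True finite_subset by (simp add: card_Diff_singleton)
  then have "C - {i} = {} \<or> (\<exists>j. C - {i} = {j})"
    using assms finite_subset by (metis card_0_eq card_1_singletonE finite_Diff le_eq_less_or_eq less_one)
  then consider "C = {i}" | j0 where "j0 \<noteq> i" "C = {i, j0}"
    using True by blast
  then show ?thesis
  proof cases
    case 1
    then show ?thesis by (auto intro!: sum.neutral simp: doubleton_eq_iff)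
  next
    case 2
    have "j0 \<in> J - {i}" using 2 assms(1) by auto
    have "(\<Sum>j\<in>J - {i}. of_bool (C = {i, j})) = (\<Sum>j\<in>J - {i}. if j = j0 then 1 else (0 :: 'b))"
      using 2 by (intro sum.cong) (auto simp: doubleton_eq_iff)
    also have "\<dots> = 1"
      using \<open>j0 \<in> J - {i}\<close> assms(2) by simp
    finally show ?thesis
      using 2 by simp
  qed
qed

lemma of_bool_sign_eq: "of_bool p * of_bool (\<not> q) - of_bool (\<not> p) * of_bool q
    = (of_bool p - of_bool q :: 'a :: ring_1)"
  by (cases p; cases q) simp_all

definition corr_loss ::
    "nat \<Rightarrow> (nat \<Rightarrow> nat set) \<Rightarrow> (nat \<Rightarrow> (nat \<Rightarrow> bool) \<Rightarrow> real) \<Rightarrow> nat set \<Rightarrow> (nat \<Rightarrow> bool) \<Rightarrow> real"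
  where "corr_loss n Cs \<theta> A s = (\<Sum>l\<in>{1..n}. of_bool (Cs l = A) * \<theta> l s)"

lemma corr_loss_not_in_corr: "\<not> in_corr n Cs A \<Longrightarrow> corr_loss n Cs \<theta> A s = 0"
  unfolding corr_loss_def in_corr_def by (auto intro!: sum.neutral)

lemma dichotomyI:
  assumes "s \<in> S" "s' \<in> S" "s i = b" "s' i = b" "s j \<noteq> s' j" "i \<noteq> j"
  shows "dichotomy S i j b"
  using assms unfolding dichotomy_def by (cases "s j") auto

locale correlation_model =
  fixes k n :: nat
    and E :: "nat \<Rightarrow> nat \<Rightarrow> bool"
    and Cs :: "nat \<Rightarrow> nat set"
    and \<theta> :: "nat \<Rightarrow> (nat \<Rightarrow> bool) \<Rightarrow> real"
  assumes Cs_sub: "\<And>l. l \<in> {1..n} \<Longrightarrow> Cs l \<subseteq> {1..k} \<and> card (Cs l) \<le> 2"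
    and \<theta>_local: "\<And>l s s'. l \<in> {1..n} \<Longrightarrow> s \<in> valid_states k E \<Longrightarrow> s' \<in> valid_states k E \<Longrightarrow>
                     (\<forall>i\<in>Cs l. s i = s' i) \<Longrightarrow> \<theta> l s = \<theta> l s'"
begin

abbreviation "S \<equiv> valid_states k E"
abbreviation "\<mu> \<equiv> mean_loss n Cs \<theta>"
abbreviation "L \<equiv> corr_loss n Cs \<theta>"

lemma mean_loss_split: "\<mu> i s = L {i} s + (\<Sum>j\<in>{1..k} - {i}. L {i, j} s)"
proof -
  have "\<mu> i s = (\<Sum>l\<in>{1..n}. \<theta> l s * (of_bool (Cs l = {i})
                   + (\<Sum>j\<in>{1..k} - {i}. of_bool (Cs l = {i, j}))))"
    unfolding mean_loss_def
  proof (intro sum.cong refl)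
    fix l assume "l \<in> {1..n}"
    then show "\<theta> l s * of_bool (i \<in> Cs l) = \<theta> l s * (of_bool (Cs l = {i})
                   + (\<Sum>j\<in>{1..k} - {i}. of_bool (Cs l = {i, j})))"
      using Cs_sub by (simp only: of_bool_mem_card_le_2[of "Cs l" "{1..k}"] finite_atLeastAtMost)
  qed
  also have "\<dots> = L {i} s + (\<Sum>l\<in>{1..n}. \<Sum>j\<in>{1..k} - {i}. of_bool (Cs l = {i, j}) * \<theta> l s)"
    unfolding corr_loss_def
    by (simp add: algebra_simps sum.distrib sum_distrib_left sum_distrib_right)
  also have "\<dots> = L {i} s + (\<Sum>j\<in>{1..k} - {i}. L {i, j} s)"
    unfolding corr_loss_def by (subst sum.swap) rule
  finally show ?thesis .
qed

lemma corr_loss_local: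
  assumes "s \<in> S" "s' \<in> S" "\<forall>a\<in>A. s a = s' a"
  shows "L A s = L A s'"
  unfolding corr_loss_def
proof (intro sum.cong refl)
  fix l assume "l \<in> {1..n}"
  then show "of_bool (Cs l = A) * \<theta> l s = of_bool (Cs l = A) * \<theta> l s'"
    using \<theta>_local[OF _ assms(1,2)] assms(3) by (cases "Cs l = A") simp_all
qed

lemma mean_loss_diff_eq_sum:
  assumes "s \<in> S" "s' \<in> S" "s i = s' i"
  shows "\<mu> i s - \<mu> i s' = (\<Sum>j\<in>{1..k} - {i}. L {i, j} s - L {i, j} s')"
  using corr_loss_local[of s s' "{i}"] assms by (simp add: mean_loss_split sum_subtractf)

lemma mean_loss_pair_diff:
  assumes "s1 \<in> S" "s2 \<in> S" "is_pair i j b s1 s2"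
  shows "\<mu> i s2 - \<mu> i s1 = L {i, j} s2 - L {i, j} s1"
proof -
  have agree: "\<And>l. l \<noteq> j \<Longrightarrow> s2 l = s1 l" and "s2 i = s1 i" "s2 j"
    using assms(3) unfolding is_pair_def by auto
  have j: "j \<in> {1..k} - {i}"
    using \<open>s2 j\<close> \<open>s2 i = s1 i\<close> assms(2,3) unfolding valid_states_def is_pair_def by auto
  have "L {i, j'} s2 - L {i, j'} s1 = 0" if "j' \<noteq> j" for j'
    using corr_loss_local[OF assms(2,1)] agree that \<open>s2 i = s1 i\<close> by auto
  then have "(\<Sum>j'\<in>{1..k} - {i}. L {i, j'} s2 - L {i, j'} s1) = L {i, j} s2 - L {i, j} s1"
    by (subst sum.remove[OF _ j]) (auto intro!: sum.neutral)
  then show ?thesis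
    using mean_loss_diff_eq_sum[OF assms(2,1) \<open>s2 i = s1 i\<close>] by simp
qed

lemma corr_loss_diff_via_pair:
  assumes "s \<in> S" "s' \<in> S" "s1 \<in> S" "s2 \<in> S" "is_pair i j b s1 s2" "s i = b" "s' i = b"
  shows "(of_bool (s j) - of_bool (s' j)) * (L {i, j} s2 - L {i, j} s1) = L {i, j} s - L {i, j} s'"
proof -
  have pair: "s1 i = b" "s2 i = b" "\<not> s1 j" "s2 j"
    using assms(5) unfolding is_pair_def by auto
  have fixed: "L {i, j} t = L {i, j} s2" if "t \<in> S" "t i = b" "t j" for t
    using corr_loss_local[OF that(1) assms(4)] pair that by simp
  have unfixed: "L {i, j} t = L {i, j} s1" if "t \<in> S" "t i = b" "\<not> t j" for t
    using corr_loss_local[OF that(1) assms(3)] pair that by simp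
  show ?thesis
  proof (cases "s j"; cases "s' j")
    assume "s j" "s' j"
    then show ?thesis using fixed assms(1,2,6,7) by simp
  next
    assume "s j" "\<not> s' j"
    then show ?thesis using fixed[OF assms(1,6)] unfixed[OF assms(2,7)] by simp
  next
    assume "\<not> s j" "s' j"
    then show ?thesis using unfixed[OF assms(1,6)] fixed[OF assms(2,7)] by simp
  next
    assume "\<not> s j" "\<not> s' j"
    then show ?thesis using unfixed assms(1,2,6,7) by simp
  qed
qed

lemma coefficient_term_eq_corr_loss_diff:
  assumes "K \<subseteq> S" "s \<in> S" "s' \<in> S" "s i = b" "s' i = b" "j \<noteq> i"
    and x: "if in_corr n Cs {i, j} \<and> dichotomy S i j b
            then (\<exists>s1\<in>K. \<exists>s2\<in>K. is_pair i j b s1 s2 \<and> x = \<mu> i s2 - \<mu> i s1)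
            else x = 0"
  shows "x * (of_bool (s j) - of_bool (s' j)) = L {i, j} s - L {i, j} s'"
proof (cases "in_corr n Cs {i, j} \<and> dichotomy S i j b")
  case True
  then obtain s1 s2 where "s1 \<in> S" "s2 \<in> S" "is_pair i j b s1 s2" "x = \<mu> i s2 - \<mu> i s1"
    using x assms(1) by auto
  then show ?thesis
    using corr_loss_diff_via_pair[of s s' s1 s2] mean_loss_pair_diff assms(2-5)
    by (simp add: mult.commute)
next
  case False
  then have "x = 0" using x by simp
  consider "\<not> in_corr n Cs {i, j}" | "s j = s' j"
    using False dichotomyI[OF assms(2-5) _ assms(6)[symmetric]] by blast
  then show ?thesis
  proof cases
    case 1
    then show ?thesis using \<open>x = 0\<close> by (simp add: corr_loss_not_in_corr)
  next
    case 2
    then show ?thesis using \<open>x = 0\<close> corr_loss_local[OF assms(2,3)] assms(4,5) by auto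
  qed
qed

end

theorem theorem1:
  fixes k n :: nat
    and E :: "nat \<Rightarrow> nat \<Rightarrow> bool"
    and Cs :: "nat \<Rightarrow> nat set"
    and \<theta> :: "nat \<Rightarrow> (nat \<Rightarrow> bool) \<Rightarrow> real"
    and K :: "(nat \<Rightarrow> bool) set"
    and X :: "nat \<Rightarrow> nat \<Rightarrow> bool \<Rightarrow> real"
  assumes E_sym: "\<And>u v. E u v \<Longrightarrow> E v u"
    and E_irrefl: "\<And>u. \<not> E u u"
    and E_verts: "\<And>u v. E u v \<Longrightarrow> u \<in> {1..k} \<and> v \<in> {1..k}"
    and Cs_sub: "\<And>l. l \<in> {1..n} \<Longrightarrow> Cs l \<subseteq> {1..k} \<and> card (Cs l) \<le> 2"
    and \<theta>_nonneg: "\<And>l s. l \<in> {1..n} \<Longrightarrow> s \<in> valid_states k E \<Longrightarrow> \<theta> l s \<ge> 0"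
    and \<theta>_local: "\<And>l s s'. l \<in> {1..n} \<Longrightarrow> s \<in> valid_states k E \<Longrightarrow> s' \<in> valid_states k E \<Longrightarrow>
                     (\<forall>i\<in>Cs l. s i = s' i) \<Longrightarrow> \<theta> l s = \<theta> l s'"
    and cover: "is_cover (valid_states k E) n Cs K"
    and X_def: "\<And>i j b. i \<in> {1..k} \<Longrightarrow> j \<in> {1..k} \<Longrightarrow>
                  (if in_corr n Cs {i, j} \<and> dichotomy (valid_states k E) i j b
                   then (\<exists>s1\<in>K. \<exists>s2\<in>K. is_pair i j b s1 s2 \<and>
                           X i j b = mean_loss n Cs \<theta> i s2 - mean_loss n Cs \<theta> i s1)
                   else X i j b = 0)"
  shows "\<forall>s\<in>valid_states k E. \<forall>i\<in>{1..k}. \<forall>b. s i = b \<longrightarrow>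
           (\<forall>s'\<in>K. s' i = b \<longrightarrow>
              mean_loss n Cs \<theta> i s = mean_loss n Cs \<theta> i s'
                + (\<Sum>j=1..k. X i j b * (of_bool (s j) * of_bool (\<not> s' j)
                                         - of_bool (\<not> s j) * of_bool (s' j))))"
proof (intro ballI allI impI)
  interpret correlation_model k n E Cs \<theta>
    using Cs_sub \<theta>_local by unfold_locales
  fix s i b s'
  assume s: "s \<in> S" "i \<in> {1..k}" "s i = b" and s': "s' \<in> K" "s' i = b"
  have "K \<subseteq> S" using cover by (simp add: is_cover_def)
  with s' have "s' \<in> S" by blast
  have "(\<Sum>j=1..k. X i j b * (of_bool (s j) * of_bool (\<not> s' j) - of_bool (\<not> s j) * of_bool (s' j)))
      = (\<Sum>j\<in>{1..k} - {i}. X i j b * (of_bool (s j) - of_bool (s' j)))"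
    using s s' by (simp add: of_bool_sign_eq sum.remove[of _ i])
  also have "\<dots> = (\<Sum>j\<in>{1..k} - {i}. L {i, j} s - L {i, j} s')"
    using coefficient_term_eq_corr_loss_diff[OF \<open>K \<subseteq> S\<close> s(1) \<open>s' \<in> S\<close> s(3) s'(2)] X_def s(2)
    by (intro sum.cong) auto
  also have "\<dots> = \<mu> i s - \<mu> i s'"
    using mean_loss_diff_eq_sum[OF s(1) \<open>s' \<in> S\<close>] s(3) s'(2) by simp
  finally show "\<mu> i s = \<mu> i s'
      + (\<Sum>j=1..k. X i j b * (of_bool (s j) * of_bool (\<not> s' j) - of_bool (\<not> s j) * of_bool (s' j)))"
    by simp
qed

end
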